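(* Let $\underline{Q}$ be a lower transition rate operator. Then for any $t>0$ and any $x,y\in\mathcal{X}$: \begin{equation*} \overline{T}_{t}\mathbb{I}_{x}(y)>0 ~~\Leftrightarrow~~ x\text{ is upper reachable from }y. \end{equation*}
   Context: $\mathcal{X}$ is a finite state space and $\mathcal{L}(\mathcal{X})$ is the set of real-valued functions on $\mathcal{X}$; $\mathbb{I}_x$ denotes the indicator of $\{x\}$. A lower transition rate operator is a map $\underline{Q}\colon\mathcal{L}(\mathcal{X})\to\mathcal{L}(\mathcal{X})$ such that for all $f,g\in\mathcal{L}(\mathcal{X})$, $\lambda\geq0$, $\mu\in\mathbb{R}$ and $x,y\in\mathcal{X}$: $\underline{Q}(\mu)=0$; $\underline{Q}(f+g)\geq\underline{Q}(f)+\underline{Q}(g)$; $\underline{Q}(\lambda f)=\lambda\underline{Q}(f)$; and $x\neq y\Rightarrow\underline{Q}(\mathbb{I}_y)(x)\geq0$. Its conjugate is $\overline{Q}f\coloneqq-\underline{Q}(-f)$. For each $t\geq0$, $\underline{T}_t$ is defined for every $f$ by the (uniquely solvable) differential equation $\frac{d}{dt}\underline{T}_tf=\underline{Q}\,\underline{T}_tf$ for all $t\geq0$ with $\underline{T}_0f=f$, and $\overline{T}_tf\coloneqq-\underline{T}_t(-f)$. Upper reachability: $x$ is upper reachable from $y$ if there is a sequence $y=x_0,\dots,x_n=x$ with, for all $k\in\{1,\dots,n\}$, $x_k\neq x_{k-1}$ and $\overline{Q}(\mathbb{I}_{x_k})(x_{k-1})>0$. *)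

theory Defs
  imports "HOL-Analysis.Analysis"
begin

definition lower_transition_rate_operator ::
  "(('x::finite \<Rightarrow> real) \<Rightarrow> ('x \<Rightarrow> real)) \<Rightarrow> bool" where
  "lower_transition_rate_operator Q \<longleftrightarrow>
     (\<forall>\<mu>::real. Q (\<lambda>_. \<mu>) = (\<lambda>_. 0)) \<and>
     (\<forall>f g z. Q (\<lambda>w. f w + g w) z \<ge> Q f z + Q g z) \<and>
     (\<forall>f (c::real). c \<ge> 0 \<longrightarrow> Q (\<lambda>w. c * f w) = (\<lambda>z. c * Q f z)) \<and>
     (\<forall>x y. x \<noteq> y \<longrightarrow> Q (indicator {y}) x \<ge> 0)"

definition upper_rate ::
  "(('x::finite \<Rightarrow> real) \<Rightarrow> ('x \<Rightarrow> real)) \<Rightarrow> ('x \<Rightarrow> real) \<Rightarrow> ('x \<Rightarrow> real)" where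
  "upper_rate Q f = (\<lambda>z. - Q (\<lambda>w. - f w) z)"

definition solves_lower_ode ::
  "(('x::finite \<Rightarrow> real) \<Rightarrow> ('x \<Rightarrow> real)) \<Rightarrow> ('x \<Rightarrow> real) \<Rightarrow> (real \<Rightarrow> 'x \<Rightarrow> real) \<Rightarrow> bool" where
  "solves_lower_ode Q f \<phi> \<longleftrightarrow> \<phi> 0 = f \<and>
     (\<forall>s\<ge>0. \<forall>z. ((\<lambda>r. \<phi> r z) has_real_derivative Q (\<phi> s) z) (at s within {0..}))"

definition lower_T ::
  "(('x::finite \<Rightarrow> real) \<Rightarrow> ('x \<Rightarrow> real)) \<Rightarrow> real \<Rightarrow> ('x \<Rightarrow> real) \<Rightarrow> ('x \<Rightarrow> real)" where
  "lower_T Q t f = (THE \<phi>. solves_lower_ode Q f \<phi> \<and> (\<forall>s<0. \<phi> s = f)) t"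

text \<open>(The clause for s < 0 only normalises the irrelevant negative-time part
  so that THE picks a unique function.)\<close>

definition upper_T ::
  "(('x::finite \<Rightarrow> real) \<Rightarrow> ('x \<Rightarrow> real)) \<Rightarrow> real \<Rightarrow> ('x \<Rightarrow> real) \<Rightarrow> ('x \<Rightarrow> real)" where
  "upper_T Q t f = (\<lambda>z. - lower_T Q t (\<lambda>w. - f w) z)"

definition upper_reachable ::
  "(('x::finite \<Rightarrow> real) \<Rightarrow> ('x \<Rightarrow> real)) \<Rightarrow> 'x \<Rightarrow> 'x \<Rightarrow> bool" where
  "upper_reachable Q x y \<longleftrightarrow>
     (\<exists>(n::nat) (s::nat \<Rightarrow> 'x). s 0 = y \<and> s n = x \<and>
        (\<forall>k\<in>{1..n}. s k \<noteq> s (k - 1) \<and> upper_rate Q (indicator {s k}) (s (k - 1)) > 0))"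

end

theory Submission
  imports Defs
begin

text \<open>Let phi(t) = lower_T Q t (-I_x), so that upper_T Q t I_x = -phi(t), phi' = Q phi and
  phi(0) = -I_x. Solutions of this equation are ordered like their initial values (Gronwall applied
  to the squared positive part of their difference), so phi <= 0. For g <= 0, superadditivity and
  positive homogeneity give Q g w <= g z * upper_rate Q I_z w + g w * Q I_w w for w ~= z. Hence
  e^(-q s) phi(s)(w) is nonincreasing, and strictly decreasing once phi(z) < 0 and
  upper_rate Q I_z w > 0: negativity spreads from x backwards along upper-reachability paths.
  Conversely, if x is not upper reachable from z, then every upper rate from z into a state from
  which x is reachable is nonpositive. On the set N of such z this gives
  Q g z >= C * (sum of g over N), and Gronwall keeps the sum of phi over N at its initial value 0.
  Finally, lower_T is well defined because Q is Lipschitz: Picard iteration yields a solution and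
  the comparison principle makes it unique.\<close>

section \<open>Calculus on the nonnegative reals\<close>

lemma has_real_derivative_atLeast_imp_at:
  fixes s :: real
  assumes "(f has_real_derivative D) (at s within {0..})" and "s > 0"
  shows "(f has_real_derivative D) (at s)"
proof -
  have "at s within {0..} = at s"
    by (rule at_within_open_subset[of s "{0<..}"]) (use assms in auto)
  with assms show ?thesis by simp
qed

lemma at_within_atLeastAtMost_eq_atLeast:
  fixes s :: real
  assumes "0 \<le> s" "s < T"
  shows "at s within {0..T} = at s within {0..}"
  by (rule at_within_nhd[of s "{..<T}"]) (use assms in auto)

lemma DERIV_atLeast_nonpos_imp_le:
  fixes b b' :: "real \<Rightarrow> real"
  assumes deriv: "\<And>s. s \<ge> 0 \<Longrightarrow> (b has_real_derivative b' s) (at s within {0..})"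
    and nonpos: "\<And>s. s > 0 \<Longrightarrow> b' s \<le> 0" and "t \<ge> 0"
  shows "b t \<le> b 0"
proof (rule DERIV_nonpos_imp_decreasing_open[OF \<open>t \<ge> 0\<close>])
  fix s :: real assume "0 < s"
  then show "\<exists>y. DERIV b s :> y \<and> y \<le> 0"
    using has_real_derivative_atLeast_imp_at[OF deriv[of s]] nonpos[of s] by auto
next
  show "continuous_on {0..t} b"
    by (rule DERIV_continuous_on[where D=b'], rule DERIV_subset[OF deriv]) auto
qed

lemma DERIV_atLeast_neg_imp_less:
  fixes b b' :: "real \<Rightarrow> real"
  assumes deriv: "\<And>s. s \<ge> 0 \<Longrightarrow> (b has_real_derivative b' s) (at s within {0..})"
    and neg: "\<And>s. s > 0 \<Longrightarrow> b' s < 0" and "t > 0"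
  shows "b t < b 0"
proof (rule DERIV_neg_imp_decreasing_open[OF \<open>t > 0\<close>])
  fix s :: real assume "0 < s"
  then show "\<exists>y. DERIV b s :> y \<and> y < 0"
    using has_real_derivative_atLeast_imp_at[OF deriv[of s]] neg[of s] by auto
next
  show "continuous_on {0..t} b"
    by (rule DERIV_continuous_on[where D=b'], rule DERIV_subset[OF deriv]) auto
qed

lemma gronwall_nonpos:
  fixes P P' :: "real \<Rightarrow> real"
  assumes deriv: "\<And>s. s \<ge> 0 \<Longrightarrow> (P has_real_derivative P' s) (at s within {0..})"
    and growth: "\<And>s. s \<ge> 0 \<Longrightarrow> P' s \<le> K * P s" and "P 0 \<le> 0" and "t \<ge> 0"
  shows "P t \<le> 0"
proof -
  have "exp (-K * t) * P t \<le> exp (-K * 0) * P 0"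
  proof (rule DERIV_atLeast_nonpos_imp_le[where b'="\<lambda>s. exp (-K * s) * (P' s - K * P s)"])
    fix s :: real assume "s \<ge> 0"
    show "((\<lambda>s. exp (-K * s) * P s) has_real_derivative exp (-K * s) * (P' s - K * P s))
        (at s within {0..})"
      by (rule derivative_eq_intros deriv[OF \<open>s \<ge> 0\<close>] refl)+ (simp add: algebra_simps)
  next
    fix s :: real assume "s > 0"
    then show "exp (-K * s) * (P' s - K * P s) \<le> 0"
      using growth[of s] by (intro mult_nonneg_nonpos) auto
  qed (use \<open>t \<ge> 0\<close> in auto)
  then have "exp (-K * t) * P t \<le> 0"
    using \<open>P 0 \<le> 0\<close> by simp
  then show ?thesis by (simp add: mult_le_0_iff)
qed

lemma has_real_derivative_max0_square:
  fixes y :: real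
  shows "((\<lambda>y. (max 0 y)\<^sup>2) has_real_derivative 2 * max 0 y) (at y)"
proof (cases y "0 :: real" rule: linorder_cases)
  case less
  have "((\<lambda>y. 0) has_real_derivative 0) (at y)" by simp
  then have "((\<lambda>y. (max 0 y)\<^sup>2) has_real_derivative 0) (at y)"
    by (rule has_field_derivative_transform_within_open[where S="{..<0}"])
       (use less in \<open>auto simp: max_def\<close>)
  then show ?thesis using less by simp
next
  case equal
  have "((\<lambda>y. (max 0 y)\<^sup>2) has_real_derivative max 0 0) (at 0)"
    unfolding CARAT_DERIV
    by (rule exI[of _ "\<lambda>z. max 0 z"]) (auto simp: power2_eq_square continuous_intros)
  then show ?thesis using equal by simp
next
  case greater
  have "((\<lambda>y. y\<^sup>2) has_real_derivative 2 * y) (at y)"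
    by (rule derivative_eq_intros refl)+ simp
  then have "((\<lambda>y. (max 0 y)\<^sup>2) has_real_derivative 2 * y) (at y)"
    by (rule has_field_derivative_transform_within_open[where S="{0<..}"])
       (use greater in \<open>auto simp: max_def\<close>)
  then show ?thesis using greater by simp
qed

lemma has_real_derivative_sum_max0_square:
  fixes u :: "real \<Rightarrow> 'x::finite \<Rightarrow> real"
  assumes "\<And>w. ((\<lambda>r. u r w) has_real_derivative u' w) (at s within S)"
  shows "((\<lambda>r. \<Sum>w\<in>UNIV. (max 0 (u r w))\<^sup>2) has_real_derivative (\<Sum>w\<in>UNIV. 2 * max 0 (u s w) * u' w))
    (at s within S)"
  using DERIV_chain2[OF has_real_derivative_max0_square assms]
  by (intro DERIV_sum) (simp add: mult.assoc)

lemma has_real_derivative_integral_atLeast: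
  assumes "continuous_on {0..} g" and "s \<ge> (0::real)"
  shows "((\<lambda>u. integral {0..u} g) has_real_derivative g s) (at s within {0..})"
proof -
  have "((\<lambda>u. integral {0..u} g) has_real_derivative g s) (at s within {0..s+1})"
    by (rule integral_has_real_derivative) (use assms in \<open>auto intro: continuous_on_subset\<close>)
  then show ?thesis
    using at_within_atLeastAtMost_eq_atLeast[of s "s+1"] assms(2) by simp
qed

lemma continuous_on_atLeast_if_atLeastAtMost:
  assumes "\<And>T. T \<ge> 0 \<Longrightarrow> continuous_on {0..T} h"
  shows "continuous_on {0::real..} h"
  unfolding continuous_on_eq_continuous_within
proof
  fix s :: real assume s: "s \<in> {0..}"
  have "continuous (at s within {0..s+1}) h"
    using assms[of "s+1"] s by (auto simp: continuous_on_eq_continuous_within)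
  then show "continuous (at s within {0..}) h"
    using at_within_atLeastAtMost_eq_atLeast[of s "s+1"] s by (simp add: continuous_within)
qed

lemma integral_cmult_power:
  assumes "t \<ge> (0::real)"
  shows "integral {0..t} (\<lambda>s. c * s ^ k) = c * t ^ Suc k / real (Suc k)"
proof -
  have "((\<lambda>s. c * s ^ k) has_integral c / Suc k * t ^ Suc k - c / Suc k * 0 ^ Suc k) {0..t}"
  proof (rule fundamental_theorem_of_calculus[OF assms])
    fix s :: real
    have "((\<lambda>s. c / Suc k * s ^ Suc k) has_real_derivative c * s ^ k) (at s within {0..t})"
      by (rule derivative_eq_intros refl)+ (simp del: of_nat_Suc)
    then show "((\<lambda>s. c / Suc k * s ^ Suc k) has_vector_derivative c * s ^ k) (at s within {0..t})"
      by (simp add: has_real_derivative_iff_has_vector_derivative)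
  qed
  then have "integral {0..t} (\<lambda>s. c * s ^ k) = c / Suc k * t ^ Suc k - c / Suc k * 0 ^ Suc k"
    by (rule integral_unique)
  then show ?thesis by simp
qed

lemma sum_indicator_expansion: "(h :: 'x::finite \<Rightarrow> real) = (\<lambda>w. \<Sum>v\<in>UNIV. h v * indicator {v} w)"
proof
  fix w
  have "(\<lambda>v. h v * indicator {v} w) = (\<lambda>v. if v = w then h w else 0)"
    by (auto simp: indicator_def)
  then show "h w = (\<Sum>v\<in>UNIV. h v * indicator {v} w)" by simp
qed


section \<open>Upper reachability as a reflexive transitive closure\<close>

definition upper_rate_graph :: "(('x::finite \<Rightarrow> real) \<Rightarrow> ('x \<Rightarrow> real)) \<Rightarrow> ('x \<times> 'x) set" where
  "upper_rate_graph Q = {(a, b). a \<noteq> b \<and> upper_rate Q (indicator {b}) a > 0}"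

lemma upper_reachable_iff_rtrancl:
  fixes Q :: "('x::finite \<Rightarrow> real) \<Rightarrow> ('x \<Rightarrow> real)"
  shows "upper_reachable Q x y \<longleftrightarrow> (y, x) \<in> (upper_rate_graph Q)\<^sup>*"
proof -
  have path_iff: "(\<forall>k\<in>{1..n}. s k \<noteq> s (k - 1) \<and> upper_rate Q (indicator {s k}) (s (k - 1)) > 0)
      \<longleftrightarrow> (\<forall>i<n. (s i, s (Suc i)) \<in> upper_rate_graph Q)" for n and s :: "nat \<Rightarrow> 'x"
  proof
    assume path: "\<forall>k\<in>{1..n}. s k \<noteq> s (k - 1) \<and> upper_rate Q (indicator {s k}) (s (k - 1)) > 0"
    show "\<forall>i<n. (s i, s (Suc i)) \<in> upper_rate_graph Q"
    proof (intro allI impI)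
      fix i assume "i < n"
      then show "(s i, s (Suc i)) \<in> upper_rate_graph Q"
        using path[rule_format, of "Suc i"] by (auto simp: upper_rate_graph_def)
    qed
  next
    assume path: "\<forall>i<n. (s i, s (Suc i)) \<in> upper_rate_graph Q"
    show "\<forall>k\<in>{1..n}. s k \<noteq> s (k - 1) \<and> upper_rate Q (indicator {s k}) (s (k - 1)) > 0"
    proof
      fix k assume "k \<in> {1..n}"
      then obtain i where "k = Suc i" "i < n" by (cases k) auto
      then show "s k \<noteq> s (k - 1) \<and> upper_rate Q (indicator {s k}) (s (k - 1)) > 0"
        using path by (auto simp: upper_rate_graph_def)
    qed
  qed
  show ?thesis
    unfolding upper_reachable_def rtrancl_power relpow_fun_conv path_iff ..
qed

lemma upper_rate_into_reachable_nonpos: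
  fixes Q :: "('x::finite \<Rightarrow> real) \<Rightarrow> ('x \<Rightarrow> real)"
  assumes "\<not> upper_reachable Q x z" and "upper_reachable Q x v"
  shows "upper_rate Q (indicator {v}) z \<le> 0"
proof (rule ccontr)
  assume "\<not> ?thesis"
  moreover have "z \<noteq> v" using assms by auto
  ultimately have "(z, v) \<in> upper_rate_graph Q" by (simp add: upper_rate_graph_def)
  then have "upper_reachable Q x z"
    using assms(2) by (auto simp: upper_reachable_iff_rtrancl intro: converse_rtrancl_into_rtrancl)
  with assms(1) show False by simp
qed


locale lower_transition_rate =
  fixes Q :: "('x::finite \<Rightarrow> real) \<Rightarrow> ('x \<Rightarrow> real)"
  assumes lower_transition_rate_operator: "lower_transition_rate_operator Q"
begin

lemma Q_const: "Q (\<lambda>_. \<mu>) = (\<lambda>_. 0)"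
  using lower_transition_rate_operator unfolding lower_transition_rate_operator_def by blast

lemma Q_superadditive: "Q f z + Q g z \<le> Q (\<lambda>w. f w + g w) z"
  using lower_transition_rate_operator unfolding lower_transition_rate_operator_def by blast

lemma Q_pos_homogeneous: "c \<ge> 0 \<Longrightarrow> Q (\<lambda>w. c * f w) z = c * Q f z"
  using lower_transition_rate_operator unfolding lower_transition_rate_operator_def by metis

lemma Q_indicator_nonneg: "z \<noteq> v \<Longrightarrow> Q (indicator {v}) z \<ge> 0"
  using lower_transition_rate_operator unfolding lower_transition_rate_operator_def by blast

lemma Q_nonpos_scaled_indicator:
  assumes "c \<le> 0"
  shows "Q (\<lambda>w. c * indicator {v} w) z = c * upper_rate Q (indicator {v}) z"
proof -
  have "(\<lambda>w. c * indicator {v} w) = (\<lambda>w. (- c) * (- indicator {v} w))" by auto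
  then show ?thesis
    using assms Q_pos_homogeneous[of "- c" "\<lambda>w. - indicator {v} w" z] by (simp add: upper_rate_def)
qed

lemma Q_sum_superadditive:
  "finite A \<Longrightarrow> (\<Sum>i\<in>A. Q (F i) z) \<le> Q (\<lambda>w. \<Sum>i\<in>A. F i w) z"
proof (induction A rule: finite_induct)
  case empty
  then show ?case by (simp add: Q_const)
next
  case (insert a A)
  then have "(\<Sum>i\<in>insert a A. Q (F i) z) \<le> Q (F a) z + Q (\<lambda>w. \<Sum>i\<in>A. F i w) z" by simp
  also have "\<dots> \<le> Q (\<lambda>w. F a w + (\<Sum>i\<in>A. F i w)) z" by (rule Q_superadditive)
  finally show ?case using insert by simp
qed

lemma Q_ge_sum_scaled_indicators: "(\<Sum>v\<in>UNIV. Q (\<lambda>w. h v * indicator {v} w) z) \<le> Q h z"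
  using Q_sum_superadditive[of UNIV "\<lambda>v w. h v * indicator {v} w" z]
  by (simp flip: sum_indicator_expansion)

lemma Q_nonneg_ge_diagonal:
  assumes "\<And>v. h v \<ge> 0"
  shows "h z * Q (indicator {z}) z \<le> Q h z"
proof -
  have "(\<Sum>v\<in>UNIV. h v * Q (indicator {v}) z)
      = h z * Q (indicator {z}) z + (\<Sum>v\<in>UNIV - {z}. h v * Q (indicator {v}) z)"
    by (subst sum.remove[of UNIV z]) auto
  moreover have "0 \<le> (\<Sum>v\<in>UNIV - {z}. h v * Q (indicator {v}) z)"
    using assms by (intro sum_nonneg) (auto intro!: mult_nonneg_nonneg Q_indicator_nonneg)
  ultimately have "h z * Q (indicator {z}) z \<le> (\<Sum>v\<in>UNIV. h v * Q (indicator {v}) z)"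
    by linarith
  also have "\<dots> = (\<Sum>v\<in>UNIV. Q (\<lambda>w. h v * indicator {v} w) z)"
    using assms by (simp add: Q_pos_homogeneous)
  also have "\<dots> \<le> Q h z" by (rule Q_ge_sum_scaled_indicators)
  finally show ?thesis .
qed

definition rate_bound :: real where
  "rate_bound = (\<Sum>z\<in>UNIV. \<Sum>v\<in>UNIV. \<bar>Q (indicator {v}) z\<bar> + \<bar>upper_rate Q (indicator {v}) z\<bar>)"

lemma rate_bound_ge: "\<bar>Q (indicator {v}) z\<bar> \<le> rate_bound" "\<bar>upper_rate Q (indicator {v}) z\<bar> \<le> rate_bound"
proof -
  let ?r = "\<lambda>z v. \<bar>Q (indicator {v}) z\<bar> + \<bar>upper_rate Q (indicator {v}) z\<bar>"
  have "?r z v \<le> (\<Sum>v\<in>UNIV. ?r z v)" by (rule member_le_sum) auto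
  also have "\<dots> \<le> rate_bound"
    unfolding rate_bound_def by (rule member_le_sum[where f="\<lambda>z. \<Sum>v\<in>UNIV. ?r z v"]) (auto intro: sum_nonneg)
  finally show "\<bar>Q (indicator {v}) z\<bar> \<le> rate_bound" "\<bar>upper_rate Q (indicator {v}) z\<bar> \<le> rate_bound"
    by auto
qed

lemma rate_bound_nonneg: "rate_bound \<ge> 0"
  unfolding rate_bound_def by (auto intro!: sum_nonneg)

lemma Q_lower_bound: "- (rate_bound * (\<Sum>v\<in>UNIV. \<bar>h v\<bar>)) \<le> Q h z"
proof -
  have "- (rate_bound * \<bar>h v\<bar>) \<le> Q (\<lambda>w. h v * indicator {v} w) z" for v
  proof (cases "h v \<ge> 0")
    case True
    have "h v * (- rate_bound) \<le> h v * Q (indicator {v}) z"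
      using True rate_bound_ge(1)[of v z] by (intro mult_left_mono) auto
    then show ?thesis using True by (simp add: Q_pos_homogeneous algebra_simps)
  next
    case False
    have "h v * rate_bound \<le> h v * upper_rate Q (indicator {v}) z"
      using False rate_bound_ge(2)[of v z] by (intro mult_left_mono_neg) auto
    then show ?thesis using False by (simp add: Q_nonpos_scaled_indicator)
  qed
  then have "(\<Sum>v\<in>UNIV. - (rate_bound * \<bar>h v\<bar>)) \<le> (\<Sum>v\<in>UNIV. Q (\<lambda>w. h v * indicator {v} w) z)"
    by (rule sum_mono)
  also have "\<dots> \<le> Q h z" by (rule Q_ge_sum_scaled_indicators)
  finally show ?thesis by (simp add: sum_distrib_left sum_negf)
qed

lemma Q_lipschitz: "\<bar>Q f z - Q g z\<bar> \<le> rate_bound * (\<Sum>v\<in>UNIV. \<bar>f v - g v\<bar>)"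
proof -
  have "Q g z + Q (\<lambda>w. f w - g w) z \<le> Q f z" using Q_superadditive[of g z "\<lambda>w. f w - g w"] by simp
  moreover have "Q f z + Q (\<lambda>w. g w - f w) z \<le> Q g z" using Q_superadditive[of f z "\<lambda>w. g w - f w"] by simp
  moreover have "- (rate_bound * (\<Sum>v\<in>UNIV. \<bar>f v - g v\<bar>)) \<le> Q (\<lambda>w. f w - g w) z" by (rule Q_lower_bound)
  moreover have "- (rate_bound * (\<Sum>v\<in>UNIV. \<bar>f v - g v\<bar>)) \<le> Q (\<lambda>w. g w - f w) z"
    using Q_lower_bound[of "\<lambda>w. g w - f w" z] by (simp add: abs_minus_commute)
  ultimately show ?thesis by (simp only: abs_le_iff) linarith
qed

lemma Q_diff_le_positive_part:
  assumes "g w \<le> f w"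
  shows "Q f w - Q g w \<le> rate_bound * (\<Sum>v\<in>UNIV. max 0 (f v - g v))"
proof -
  define p where "p v = max 0 (f v - g v)" for v
  have "(\<lambda>v. f v + (p v - (f v - g v))) = (\<lambda>v. g v + p v)" by auto
  then have "Q f w + Q (\<lambda>v. p v - (f v - g v)) w \<le> Q (\<lambda>v. g v + p v) w"
    using Q_superadditive[of f w "\<lambda>v. p v - (f v - g v)"] by simp
  moreover have "0 \<le> Q (\<lambda>v. p v - (f v - g v)) w"
    using Q_nonneg_ge_diagonal[of "\<lambda>v. p v - (f v - g v)" w] assms by (simp add: p_def)
  moreover have "Q (\<lambda>v. g v + p v) w + Q (\<lambda>v. - p v) w \<le> Q g w"
    using Q_superadditive[of "\<lambda>v. g v + p v" w "\<lambda>v. - p v"] by simp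
  moreover have "- (rate_bound * (\<Sum>v\<in>UNIV. p v)) \<le> Q (\<lambda>v. - p v) w"
    using Q_lower_bound[of "\<lambda>v. - p v" w] by (simp add: p_def)
  ultimately show ?thesis unfolding p_def by linarith
qed

lemma Q_nonpos_le_upper_rate:
  assumes "\<And>v. g v \<le> 0"
  shows "Q g w \<le> g z * upper_rate Q (indicator {z}) w + (if w = z then 0 else g w * Q (indicator {w}) w)"
proof -
  define m where "m v = g z * indicator {z} v - g v" for v
  have "Q g w + Q m w \<le> Q (\<lambda>v. g v + m v) w" by (rule Q_superadditive)
  moreover have "Q (\<lambda>v. g v + m v) w = g z * upper_rate Q (indicator {z}) w"
    using Q_nonpos_scaled_indicator[OF assms[of z]] by (simp add: m_def)
  moreover have "m w * Q (indicator {w}) w \<le> Q m w"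
    using assms by (intro Q_nonneg_ge_diagonal) (auto simp: m_def indicator_def)
  moreover have "m w = (if w = z then 0 else - g w)" by (auto simp: m_def)
  ultimately show ?thesis by (auto split: if_splits)
qed

lemma Q_nonpos_ge_on_unreachable:
  assumes "\<And>v. g v \<le> 0" and "\<not> upper_reachable Q x z"
  shows "rate_bound * (\<Sum>v\<in>{v. \<not> upper_reachable Q x v}. g v) \<le> Q g z"
proof -
  let ?N = "{v. \<not> upper_reachable Q x v}"
  have "(if v \<in> ?N then rate_bound * g v else 0) \<le> Q (\<lambda>w. g v * indicator {v} w) z" for v
  proof (cases "v \<in> ?N")
    case True
    have "g v * rate_bound \<le> g v * upper_rate Q (indicator {v}) z"
      using assms(1)[of v] rate_bound_ge(2)[of v z] by (intro mult_left_mono_neg) auto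
    then show ?thesis using True assms(1) by (simp add: Q_nonpos_scaled_indicator mult.commute)
  next
    case False
    then have "upper_rate Q (indicator {v}) z \<le> 0"
      using upper_rate_into_reachable_nonpos[OF assms(2)] by auto
    then show ?thesis using False assms(1)[of v] by (simp add: Q_nonpos_scaled_indicator mult_nonpos_nonpos)
  qed
  then have "(\<Sum>v\<in>UNIV. if v \<in> ?N then rate_bound * g v else 0)
      \<le> (\<Sum>v\<in>UNIV. Q (\<lambda>w. g v * indicator {v} w) z)"
    by (rule sum_mono)
  also have "\<dots> \<le> Q g z" by (rule Q_ge_sum_scaled_indicators)
  finally show ?thesis
    by (simp add: sum.If_cases sum_distrib_left)
qed

subsection \<open>Comparison principle\<close>

lemma solves_lower_ode_initial: "solves_lower_ode Q f \<phi> \<Longrightarrow> \<phi> 0 = f"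
  unfolding solves_lower_ode_def by blast

lemma solves_lower_ode_deriv:
  "solves_lower_ode Q f \<phi> \<Longrightarrow> s \<ge> 0 \<Longrightarrow> ((\<lambda>r. \<phi> r z) has_real_derivative Q (\<phi> s) z) (at s within {0..})"
  unfolding solves_lower_ode_def by blast

lemma solves_lower_ode_mono:
  assumes \<phi>: "solves_lower_ode Q f \<phi>" and \<psi>: "solves_lower_ode Q g \<psi>"
    and le: "\<And>v. f v \<le> g v" and "t \<ge> 0"
  shows "\<phi> t w \<le> \<psi> t w"
proof -
  define P where "P r = (\<Sum>v\<in>UNIV. (max 0 (\<phi> r v - \<psi> r v))\<^sup>2)" for r
  define P' where "P' s = (\<Sum>v\<in>UNIV. 2 * max 0 (\<phi> s v - \<psi> s v) * (Q (\<phi> s) v - Q (\<psi> s) v))" for s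
  have "P t \<le> 0"
  proof (rule gronwall_nonpos[where P=P and P'=P' and K="2 * rate_bound * real CARD('x)"])
    fix s :: real assume s: "s \<ge> 0"
    show "(P has_real_derivative P' s) (at s within {0..})"
      unfolding P_def P'_def
      by (intro has_real_derivative_sum_max0_square DERIV_diff
          solves_lower_ode_deriv[OF \<phi> s] solves_lower_ode_deriv[OF \<psi> s])
    let ?S = "\<Sum>v\<in>UNIV. max 0 (\<phi> s v - \<psi> s v)"
    have "2 * max 0 (\<phi> s v - \<psi> s v) * (Q (\<phi> s) v - Q (\<psi> s) v)
        \<le> 2 * max 0 (\<phi> s v - \<psi> s v) * (rate_bound * ?S)" for v
    proof (cases "\<psi> s v \<le> \<phi> s v")
      case True
      then show ?thesis by (intro mult_left_mono Q_diff_le_positive_part) auto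
    qed simp
    then have "P' s \<le> (\<Sum>v\<in>UNIV. 2 * max 0 (\<phi> s v - \<psi> s v) * (rate_bound * ?S))"
      unfolding P'_def by (rule sum_mono)
    also have "\<dots> = 2 * rate_bound * ?S\<^sup>2"
      by (simp add: sum_distrib_left[symmetric] sum_distrib_right[symmetric] power2_eq_square algebra_simps)
    also have "\<dots> \<le> 2 * rate_bound * (P s * real CARD('x))"
      unfolding P_def using rate_bound_nonneg
      by (intro mult_left_mono sum_squared_le_sum_of_squares) auto
    finally show "P' s \<le> 2 * rate_bound * real CARD('x) * P s" by (simp add: algebra_simps)
  next
    show "P 0 \<le> 0"
      using le by (simp add: P_def solves_lower_ode_initial[OF \<phi>] solves_lower_ode_initial[OF \<psi>])
  qed fact
  then have "\<forall>v\<in>UNIV. (max 0 (\<phi> t v - \<psi> t v))\<^sup>2 = 0"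
    unfolding P_def by (subst sum_nonneg_eq_0_iff[symmetric]) (auto intro!: antisym sum_nonneg)
  then have "(max 0 (\<phi> t w - \<psi> t w))\<^sup>2 = 0" by blast
  then show ?thesis by (cases "\<phi> t w \<le> \<psi> t w") auto
qed

lemma solves_lower_ode_unique:
  assumes "solves_lower_ode Q f \<phi>" and "solves_lower_ode Q f \<psi>" and "t \<ge> 0"
  shows "\<phi> t = \<psi> t"
  using solves_lower_ode_mono[OF assms(1,2) _ assms(3)] solves_lower_ode_mono[OF assms(2,1) _ assms(3)]
  by (simp add: fun_eq_iff order_antisym)

lemma solves_lower_ode_nonpos:
  assumes "solves_lower_ode Q f \<phi>" and "\<And>v. f v \<le> 0" and "t \<ge> 0"
  shows "\<phi> t w \<le> 0"
proof -
  have "solves_lower_ode Q (\<lambda>_. 0) (\<lambda>_ _. 0)"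
    by (simp add: solves_lower_ode_def Q_const)
  then show ?thesis
    using solves_lower_ode_mono[OF assms(1) _ assms(2,3)] by blast
qed

subsection \<open>Existence by Picard iteration\<close>

lemma continuous_on_Q:
  assumes "\<And>v. continuous_on S (\<lambda>s. g s v)"
  shows "continuous_on S (\<lambda>s. Q (g s) w)"
  unfolding continuous_on_def
proof
  fix s assume s: "s \<in> S"
  have "((\<lambda>r. rate_bound * (\<Sum>v\<in>UNIV. \<bar>g r v - g s v\<bar>)) \<longlongrightarrow> rate_bound * (\<Sum>v\<in>UNIV. \<bar>g s v - g s v\<bar>))
      (at s within S)"
    using assms s unfolding continuous_on_def by (intro tendsto_intros) auto
  then have "((\<lambda>r. rate_bound * (\<Sum>v\<in>UNIV. \<bar>g r v - g s v\<bar>)) \<longlongrightarrow> 0) (at s within S)" by simp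
  then have "((\<lambda>r. Q (g r) w - Q (g s) w) \<longlongrightarrow> 0) (at s within S)"
    by (rule Lim_null_comparison[rotated]) (auto intro: always_eventually Q_lipschitz)
  then show "((\<lambda>r. Q (g r) w) \<longlongrightarrow> Q (g s) w) (at s within S)"
    by (rule LIM_zero_cancel)
qed

primrec picard_iterate :: "('x \<Rightarrow> real) \<Rightarrow> nat \<Rightarrow> real \<Rightarrow> 'x \<Rightarrow> real" where
  "picard_iterate f 0 = (\<lambda>t. f)"
| "picard_iterate f (Suc n) = (\<lambda>t w. f w + integral {0..t} (\<lambda>s. Q (picard_iterate f n s) w))"

lemma continuous_on_picard_iterate: "continuous_on {0..} (\<lambda>t. picard_iterate f n t w)"
proof (induction n arbitrary: w)
  case (Suc n)
  have "continuous_on {0..} (\<lambda>s. Q (picard_iterate f n s) w)"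
    by (rule continuous_on_Q) (rule Suc)
  then have "continuous_on {0..} (\<lambda>t. integral {0..t} (\<lambda>s. Q (picard_iterate f n s) w))"
    by (rule DERIV_continuous_on[OF has_real_derivative_integral_atLeast]) auto
  then show ?case by (simp add: continuous_intros)
qed simp

lemma integrable_Q_picard_iterate: "(\<lambda>s. Q (picard_iterate f n s) w) integrable_on {0..t}"
proof (rule integrable_continuous_real)
  show "continuous_on {0..t} (\<lambda>s. Q (picard_iterate f n s) w)"
    by (rule continuous_on_subset[OF continuous_on_Q[OF continuous_on_picard_iterate]]) auto
qed

lemma picard_iterate_Suc_diff:
  "picard_iterate f (Suc (Suc n)) t w - picard_iterate f (Suc n) t w
    = integral {0..t} (\<lambda>s. Q (picard_iterate f (Suc n) s) w - Q (picard_iterate f n s) w)"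
proof -
  have "picard_iterate f (Suc (Suc n)) t w - picard_iterate f (Suc n) t w
      = integral {0..t} (\<lambda>s. Q (picard_iterate f (Suc n) s) w)
        - integral {0..t} (\<lambda>s. Q (picard_iterate f n s) w)"
    by (simp del: picard_iterate.simps(2) add: picard_iterate.simps(2)[of f "Suc n"]
        picard_iterate.simps(2)[of f n])
  also have "\<dots> = integral {0..t} (\<lambda>s. Q (picard_iterate f (Suc n) s) w - Q (picard_iterate f n s) w)"
    by (intro integral_diff[symmetric] integrable_Q_picard_iterate)
  finally show ?thesis .
qed

lemma picard_iterate_step_le:
  assumes "t \<ge> 0"
  shows "(\<Sum>w\<in>UNIV. \<bar>picard_iterate f (Suc n) t w - picard_iterate f n t w\<bar>)
    \<le> (\<Sum>w\<in>UNIV. \<bar>Q f w\<bar>) * (real CARD('x) * rate_bound) ^ n * t ^ Suc n / fact (Suc n)"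
  using assms
proof (induction n arbitrary: t)
  case 0
  then show ?case by (simp add: abs_mult sum_distrib_left mult.commute)
next
  case (Suc n)
  let ?M = "(\<Sum>w\<in>UNIV. \<bar>Q f w\<bar>) * (real CARD('x) * rate_bound) ^ n"
  let ?B = "\<lambda>s. rate_bound * ?M * s ^ Suc n / fact (Suc n)"
  have "\<bar>picard_iterate f (Suc (Suc n)) t w - picard_iterate f (Suc n) t w\<bar>
      \<le> rate_bound * ?M * t ^ Suc (Suc n) / fact (Suc (Suc n))" for w
  proof -
    have "norm (integral {0..t} (\<lambda>s. Q (picard_iterate f (Suc n) s) w - Q (picard_iterate f n s) w))
        \<le> integral {0..t} ?B"
    proof (rule integral_norm_bound_integral)
      show "(\<lambda>s. Q (picard_iterate f (Suc n) s) w - Q (picard_iterate f n s) w) integrable_on {0..t}"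
        by (intro integrable_diff integrable_Q_picard_iterate)
      show "?B integrable_on {0..t}"
        by (intro integrable_continuous_real continuous_intros) auto
    next
      fix s assume s: "s \<in> {0..t}"
      have "\<bar>Q (picard_iterate f (Suc n) s) w - Q (picard_iterate f n s) w\<bar>
          \<le> rate_bound * (\<Sum>v\<in>UNIV. \<bar>picard_iterate f (Suc n) s v - picard_iterate f n s v\<bar>)"
        by (rule Q_lipschitz)
      also have "\<dots> \<le> rate_bound * (?M * s ^ Suc n / fact (Suc n))"
        using Suc.IH[of s] s rate_bound_nonneg by (intro mult_left_mono) auto
      finally show "norm (Q (picard_iterate f (Suc n) s) w - Q (picard_iterate f n s) w) \<le> ?B s"
        by simp
    qed
    then have "\<bar>picard_iterate f (Suc (Suc n)) t w - picard_iterate f (Suc n) t w\<bar> \<le> integral {0..t} ?B"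
      by (simp only: picard_iterate_Suc_diff real_norm_def)
    also have "\<dots> = rate_bound * ?M / fact (Suc n) * t ^ Suc (Suc n) / Suc (Suc n)"
      using integral_cmult_power[OF Suc.prems, of "rate_bound * ?M / fact (Suc n)" "Suc n"] by simp
    also have "\<dots> = rate_bound * ?M * t ^ Suc (Suc n) / fact (Suc (Suc n))"
      by (simp add: field_simps del: of_nat_Suc)
    finally show ?thesis .
  qed
  then have "(\<Sum>w\<in>UNIV. \<bar>picard_iterate f (Suc (Suc n)) t w - picard_iterate f (Suc n) t w\<bar>)
      \<le> (\<Sum>w\<in>(UNIV::'x set). rate_bound * ?M * t ^ Suc (Suc n) / fact (Suc (Suc n)))"
    by (rule sum_mono)
  then show ?case by (simp add: algebra_simps)
qed

lemma picard_iterate_step_le_majorant: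
  assumes "0 \<le> t" "t \<le> T"
  shows "\<bar>picard_iterate f (Suc i) t w - picard_iterate f i t w\<bar>
    \<le> (\<Sum>v\<in>UNIV. \<bar>Q f v\<bar>) * T * (real CARD('x) * rate_bound * T) ^ i / fact i"
proof -
  let ?M = "(\<Sum>v\<in>UNIV. \<bar>Q f v\<bar>) * (real CARD('x) * rate_bound) ^ i"
  have M: "?M \<ge> 0" using rate_bound_nonneg by simp
  have "\<bar>picard_iterate f (Suc i) t w - picard_iterate f i t w\<bar>
      \<le> (\<Sum>v\<in>UNIV. \<bar>picard_iterate f (Suc i) t v - picard_iterate f i t v\<bar>)"
    by (rule member_le_sum) auto
  also have "\<dots> \<le> ?M * t ^ Suc i / fact (Suc i)"
    by (rule picard_iterate_step_le[OF assms(1)])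
  also have "\<dots> \<le> ?M * T ^ Suc i / fact i"
    using M assms by (intro frac_le mult_left_mono power_mono fact_mono) auto
  also have "\<dots> = (\<Sum>v\<in>UNIV. \<bar>Q f v\<bar>) * T * (real CARD('x) * rate_bound * T) ^ i / fact i"
    by (simp add: power_mult_distrib algebra_simps)
  finally show ?thesis .
qed

definition picard_limit :: "('x \<Rightarrow> real) \<Rightarrow> real \<Rightarrow> 'x \<Rightarrow> real" where
  "picard_limit f t w = f w + (\<Sum>i. picard_iterate f (Suc i) t w - picard_iterate f i t w)"

lemma uniform_limit_picard_iterate:
  assumes "T \<ge> 0"
  shows "uniform_limit {0..T} (\<lambda>n t. picard_iterate f n t w) (\<lambda>t. picard_limit f t w) sequentially"
proof -
  let ?M = "\<lambda>i. (\<Sum>v\<in>UNIV. \<bar>Q f v\<bar>) * T * (real CARD('x) * rate_bound * T) ^ i / fact i"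
  have "summable (\<lambda>i. (\<Sum>v\<in>UNIV. \<bar>Q f v\<bar>) * T * (inverse (fact i) * (real CARD('x) * rate_bound * T) ^ i))"
    by (intro summable_mult summable_exp)
  then have "summable ?M"
    by (simp add: divide_inverse ac_simps)
  then have "uniform_limit {0..T} (\<lambda>n t. \<Sum>i<n. picard_iterate f (Suc i) t w - picard_iterate f i t w)
      (\<lambda>t. \<Sum>i. picard_iterate f (Suc i) t w - picard_iterate f i t w) sequentially"
    by (intro Weierstrass_m_test[where M="?M"])
       (auto simp del: picard_iterate.simps intro: picard_iterate_step_le_majorant)
  then have "uniform_limit {0..T} (\<lambda>n t. f w + (\<Sum>i<n. picard_iterate f (Suc i) t w - picard_iterate f i t w))
      (\<lambda>t. picard_limit f t w) sequentially"
    unfolding picard_limit_def by (intro uniform_limit_intros) auto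
  moreover have "(\<lambda>n t. f w + (\<Sum>i<n. picard_iterate f (Suc i) t w - picard_iterate f i t w))
      = (\<lambda>n t. picard_iterate f n t w)"
    by (simp only: sum_lessThan_telescope[where f="\<lambda>i. picard_iterate f i _ w"] picard_iterate.simps(1))
       simp
  ultimately show ?thesis by simp
qed

lemma continuous_on_picard_limit: "continuous_on {0..} (\<lambda>t. picard_limit f t w)"
proof (rule continuous_on_atLeast_if_atLeastAtMost)
  fix T :: real assume "T \<ge> 0"
  then show "continuous_on {0..T} (\<lambda>t. picard_limit f t w)"
    by (intro uniform_limit_theorem[OF _ uniform_limit_picard_iterate] always_eventually allI
        continuous_on_subset[OF continuous_on_picard_iterate]) auto
qed

text \<open>For t < 0 the interval {0..t} is empty.\<close>
lemma picard_limit_nonpos_time: "t \<le> 0 \<Longrightarrow> picard_limit f t = f"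
proof -
  assume "t \<le> 0"
  then have "picard_iterate f n t = f" for n
    by (cases n; cases "t = 0") (auto simp: fun_eq_iff)
  then show ?thesis by (simp add: picard_limit_def fun_eq_iff del: picard_iterate.simps)
qed

lemma uniform_limit_Q_picard_iterate:
  assumes "T \<ge> 0"
  shows "uniform_limit {0..T} (\<lambda>n s. Q (picard_iterate f n s) w) (\<lambda>s. Q (picard_limit f s) w) sequentially"
proof (rule uniform_limitI)
  fix e :: real assume "e > 0"
  define a where "a = rate_bound * CARD('x)"
  have "a \<ge> 0" using rate_bound_nonneg by (simp add: a_def)
  define d where "d = e / (a + 1)"
  have d: "d > 0" using \<open>e > 0\<close> \<open>a \<ge> 0\<close> by (simp add: d_def)
  have d_le: "rate_bound * (CARD('x) * d) < e"
    using \<open>e > 0\<close> \<open>a \<ge> 0\<close> by (simp add: a_def d_def field_simps)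
  have "\<forall>\<^sub>F n in sequentially. \<forall>v. \<forall>s\<in>{0..T}. dist (picard_iterate f n s v) (picard_limit f s v) < d"
    by (intro eventually_all_finite uniform_limitD[OF uniform_limit_picard_iterate[OF assms] d])
  then show "\<forall>\<^sub>F n in sequentially. \<forall>s\<in>{0..T}. dist (Q (picard_iterate f n s) w) (Q (picard_limit f s) w) < e"
  proof (rule eventually_mono, intro ballI)
    fix n s assume close: "\<forall>v. \<forall>s\<in>{0..T}. dist (picard_iterate f n s v) (picard_limit f s v) < d"
      and "s \<in> {0..T}"
    have "\<bar>Q (picard_iterate f n s) w - Q (picard_limit f s) w\<bar>
        \<le> rate_bound * (\<Sum>v\<in>UNIV. \<bar>picard_iterate f n s v - picard_limit f s v\<bar>)"
      by (rule Q_lipschitz)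
    also have "\<dots> \<le> rate_bound * (CARD('x) * d)"
      using close \<open>s \<in> {0..T}\<close> rate_bound_nonneg
      by (intro mult_left_mono sum_bounded_above) (auto simp: dist_real_def less_imp_le)
    finally show "dist (Q (picard_iterate f n s) w) (Q (picard_limit f s) w) < e"
      using d_le by (simp add: dist_real_def)
  qed
qed

lemma picard_limit_integral_eq:
  assumes "t \<ge> 0"
  shows "picard_limit f t w = f w + integral {0..t} (\<lambda>s. Q (picard_limit f s) w)"
proof -
  obtain I J where I: "\<And>n. ((\<lambda>s. Q (picard_iterate f n s) w) has_integral I n) {0..t}"
    and J: "((\<lambda>s. Q (picard_limit f s) w) has_integral J) {0..t}" and "I \<longlonglongrightarrow> J"
    by (rule uniform_limit_integral[OF uniform_limit_Q_picard_iterate[OF assms]])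
       (auto intro: continuous_on_subset[OF continuous_on_Q[OF continuous_on_picard_iterate]])
  have "(\<lambda>n. picard_iterate f (Suc n) t w) = (\<lambda>n. f w + I n)"
    using I by (auto simp: integral_unique)
  with \<open>I \<longlonglongrightarrow> J\<close> have "(\<lambda>n. picard_iterate f (Suc n) t w) \<longlonglongrightarrow> f w + J"
    by (simp add: tendsto_add)
  moreover have "(\<lambda>n. picard_iterate f (Suc n) t w) \<longlonglongrightarrow> picard_limit f t w"
    using assms by (intro LIMSEQ_Suc tendsto_uniform_limitI[OF uniform_limit_picard_iterate]) auto
  ultimately have "picard_limit f t w = f w + J"
    using LIMSEQ_unique by blast
  then show ?thesis using J by (simp add: integral_unique)
qed

lemma solves_lower_ode_picard_limit: "solves_lower_ode Q f (picard_limit f)"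
  unfolding solves_lower_ode_def
proof (intro conjI allI impI)
  show "picard_limit f 0 = f" by (simp add: picard_limit_nonpos_time)
next
  fix s :: real and w assume "s \<ge> 0"
  have "continuous_on {0..} (\<lambda>s. Q (picard_limit f s) w)"
    by (rule continuous_on_Q) (rule continuous_on_picard_limit)
  from DERIV_add[OF DERIV_const has_real_derivative_integral_atLeast[OF this \<open>s \<ge> 0\<close>]]
  have "((\<lambda>u. f w + integral {0..u} (\<lambda>s. Q (picard_limit f s) w)) has_real_derivative Q (picard_limit f s) w)
      (at s within {0..})"
    by simp
  then show "((\<lambda>r. picard_limit f r w) has_real_derivative Q (picard_limit f s) w) (at s within {0..})"
    by (rule has_field_derivative_transform_within[where d=1]) (use \<open>s \<ge> 0\<close> picard_limit_integral_eq in auto)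
qed

lemma lower_T_eq_picard_limit: "lower_T Q t f = picard_limit f t"
proof -
  have "(THE \<phi>. solves_lower_ode Q f \<phi> \<and> (\<forall>s<0. \<phi> s = f)) = picard_limit f"
  proof (rule the1_equality)
    show "\<exists>!\<phi>. solves_lower_ode Q f \<phi> \<and> (\<forall>s<0. \<phi> s = f)"
    proof (rule ex1I)
      show "solves_lower_ode Q f (picard_limit f) \<and> (\<forall>s<0. picard_limit f s = f)"
        by (simp add: solves_lower_ode_picard_limit picard_limit_nonpos_time)
    next
      fix \<psi> assume \<psi>: "solves_lower_ode Q f \<psi> \<and> (\<forall>s<0. \<psi> s = f)"
      show "\<psi> = picard_limit f"
      proof
        fix s show "\<psi> s = picard_limit f s"
          using \<psi> solves_lower_ode_unique[OF conjunct1[OF \<psi>] solves_lower_ode_picard_limit, of s]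
          by (cases "s < 0") (auto simp: picard_limit_nonpos_time)
      qed
    qed
  qed (simp add: solves_lower_ode_picard_limit picard_limit_nonpos_time)
  then show ?thesis by (simp add: lower_T_def)
qed

lemma solves_lower_ode_lower_T: "solves_lower_ode Q f (\<lambda>t. lower_T Q t f)"
  by (simp add: lower_T_eq_picard_limit solves_lower_ode_picard_limit)

subsection \<open>The solution started at the negated indicator\<close>

lemma has_real_derivative_exp_scaled_solution:
  assumes "solves_lower_ode Q f \<phi>" and "s \<ge> 0"
  shows "((\<lambda>s. exp (- q * s) * \<phi> s w) has_real_derivative exp (- q * s) * (Q (\<phi> s) w - q * \<phi> s w))
    (at s within {0..})"
  by (rule derivative_eq_intros solves_lower_ode_deriv[OF assms] refl)+ (simp add: algebra_simps)

lemma solves_lower_ode_from_neg_indicator_neg: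
  assumes \<phi>: "solves_lower_ode Q (\<lambda>w. - indicator {x} w) \<phi>" and "t > 0"
  shows "\<phi> t x < 0"
proof -
  define r where "r = upper_rate Q (indicator {x}) x"
  have nonpos: "\<phi> s v \<le> 0" if "s \<ge> 0" for s v
    using solves_lower_ode_nonpos[OF \<phi> _ that] by simp
  have "exp (- r * t) * \<phi> t x \<le> exp (- r * 0) * \<phi> 0 x"
  proof (rule DERIV_atLeast_nonpos_imp_le[where b'="\<lambda>s. exp (- r * s) * (Q (\<phi> s) x - r * \<phi> s x)"])
    fix s :: real assume "s \<ge> 0"
    then show "((\<lambda>s. exp (- r * s) * \<phi> s x) has_real_derivative exp (- r * s) * (Q (\<phi> s) x - r * \<phi> s x))
        (at s within {0..})"
      by (rule has_real_derivative_exp_scaled_solution[OF \<phi>])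
  next
    fix s :: real assume "s > 0"
    then have "Q (\<phi> s) x \<le> \<phi> s x * r"
      using Q_nonpos_le_upper_rate[of "\<phi> s" x x, OF nonpos] by (simp add: r_def)
    then show "exp (- r * s) * (Q (\<phi> s) x - r * \<phi> s x) \<le> 0"
      by (intro mult_nonneg_nonpos) (auto simp: algebra_simps)
  qed (use \<open>t > 0\<close> in auto)
  then have "exp (- r * t) * \<phi> t x < 0"
    using solves_lower_ode_initial[OF \<phi>] by simp
  then show ?thesis by (simp add: mult_less_0_iff)
qed

lemma solves_lower_ode_neg_propagates:
  assumes \<phi>: "solves_lower_ode Q f \<phi>" and "\<And>v. f v \<le> 0"
    and neg: "\<And>t. t > 0 \<Longrightarrow> \<phi> t z < 0" and edge: "(w, z) \<in> upper_rate_graph Q" and "t > 0"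
  shows "\<phi> t w < 0"
proof -
  define q where "q = Q (indicator {w}) w"
  have "exp (- q * t) * \<phi> t w < exp (- q * 0) * \<phi> 0 w"
  proof (rule DERIV_atLeast_neg_imp_less[where b'="\<lambda>s. exp (- q * s) * (Q (\<phi> s) w - q * \<phi> s w)"])
    fix s :: real assume "s \<ge> 0"
    then show "((\<lambda>s. exp (- q * s) * \<phi> s w) has_real_derivative exp (- q * s) * (Q (\<phi> s) w - q * \<phi> s w))
        (at s within {0..})"
      by (rule has_real_derivative_exp_scaled_solution[OF \<phi>])
  next
    fix s :: real assume "s > 0"
    have "w \<noteq> z" and rate: "upper_rate Q (indicator {z}) w > 0"
      using edge by (auto simp: upper_rate_graph_def)
    then have "Q (\<phi> s) w \<le> \<phi> s z * upper_rate Q (indicator {z}) w + \<phi> s w * q"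
      using Q_nonpos_le_upper_rate[of "\<phi> s" w z, OF solves_lower_ode_nonpos[OF \<phi>]] assms(2) \<open>s > 0\<close>
      by (simp add: q_def)
    moreover have "\<phi> s z * upper_rate Q (indicator {z}) w < 0"
      using neg[OF \<open>s > 0\<close>] rate by (simp add: mult_neg_pos)
    ultimately show "exp (- q * s) * (Q (\<phi> s) w - q * \<phi> s w) < 0"
      by (intro mult_pos_neg) (auto simp: algebra_simps)
  qed fact
  also have "\<dots> \<le> 0"
    using solves_lower_ode_initial[OF \<phi>] assms(2)[of w] by simp
  finally show ?thesis by (simp add: mult_less_0_iff)
qed

lemma upper_reachable_imp_solution_neg:
  assumes \<phi>: "solves_lower_ode Q (\<lambda>w. - indicator {x} w) \<phi>" and "upper_reachable Q x y" and "t > 0"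
  shows "\<phi> t y < 0"
proof -
  have "(y, x) \<in> (upper_rate_graph Q)\<^sup>*"
    using assms(2) by (simp add: upper_reachable_iff_rtrancl)
  then have "\<forall>t>0. \<phi> t y < 0"
  proof (induction rule: converse_rtrancl_induct)
    case base
    show ?case
    proof (intro allI impI)
      fix t :: real assume "t > 0"
      then show "\<phi> t x < 0" by (rule solves_lower_ode_from_neg_indicator_neg[OF \<phi>])
    qed
  next
    case (step w z)
    show ?case
    proof (intro allI impI)
      fix t :: real assume "t > 0"
      have "- indicator {x} v \<le> (0::real)" for v by simp
      moreover have "\<And>s. s > 0 \<Longrightarrow> \<phi> s z < 0" using step.IH by blast
      ultimately show "\<phi> t w < 0"
        by (rule solves_lower_ode_neg_propagates[OF \<phi> _ _ step.hyps(1) \<open>t > 0\<close>])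
    qed
  qed
  with \<open>t > 0\<close> show ?thesis by blast
qed

lemma not_upper_reachable_imp_solution_zero:
  assumes \<phi>: "solves_lower_ode Q (\<lambda>w. - indicator {x} w) \<phi>" and "\<not> upper_reachable Q x y" and "t \<ge> 0"
  shows "\<phi> t y = 0"
proof -
  let ?N = "{v. \<not> upper_reachable Q x v}"
  have nonpos: "\<phi> s w \<le> 0" if "s \<ge> 0" for s w
    using solves_lower_ode_nonpos[OF \<phi> _ that] by simp
  define S where "S r = - (\<Sum>z\<in>?N. \<phi> r z)" for r
  define S' where "S' s = - (\<Sum>z\<in>?N. Q (\<phi> s) z)" for s
  have "S t \<le> 0"
  proof (rule gronwall_nonpos[where P=S and P'=S' and K="real (card ?N) * rate_bound"])
    fix s :: real assume s: "s \<ge> 0"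
    show "(S has_real_derivative S' s) (at s within {0..})"
      unfolding S_def S'_def by (intro DERIV_minus DERIV_sum solves_lower_ode_deriv[OF \<phi> s])
    have "(\<Sum>z\<in>?N. rate_bound * (\<Sum>v\<in>?N. \<phi> s v)) \<le> (\<Sum>z\<in>?N. Q (\<phi> s) z)"
      using nonpos[OF s] by (intro sum_mono Q_nonpos_ge_on_unreachable) auto
    then show "S' s \<le> real (card ?N) * rate_bound * S s"
      by (simp add: S_def S'_def)
  next
    have "upper_reachable Q x x" by (simp add: upper_reachable_iff_rtrancl)
    then have "\<forall>z\<in>?N. \<phi> 0 z = 0" by (auto simp: solves_lower_ode_initial[OF \<phi>] indicator_def)
    then show "S 0 \<le> 0" by (simp add: S_def)
  qed fact
  then have "\<forall>z\<in>?N. - \<phi> t z = 0"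
    using nonpos[OF \<open>t \<ge> 0\<close>] unfolding S_def
    by (subst sum_nonneg_eq_0_iff[symmetric]) (auto intro!: antisym sum_nonneg sum_nonpos simp: sum_negf)
  then show ?thesis using assms(2) by auto
qed

end

theorem proposition11:
  fixes Q :: "('x::finite \<Rightarrow> real) \<Rightarrow> ('x \<Rightarrow> real)"
    and t :: real and x y :: 'x
  assumes "lower_transition_rate_operator Q"
    and "t > 0"
  shows "upper_T Q t (indicator {x}) y > 0 \<longleftrightarrow> upper_reachable Q x y"
proof -
  interpret lower_transition_rate Q by unfold_locales (rule assms(1))
  let ?\<phi> = "\<lambda>s. lower_T Q s (\<lambda>w. - indicator {x} w)"
  have \<phi>: "solves_lower_ode Q (\<lambda>w. - indicator {x} w) ?\<phi>"
    by (rule solves_lower_ode_lower_T)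
  have "upper_T Q t (indicator {x}) y = - ?\<phi> t y"
    by (simp add: upper_T_def)
  moreover have "upper_reachable Q x y \<Longrightarrow> ?\<phi> t y < 0"
    using upper_reachable_imp_solution_neg[OF \<phi> _ \<open>t > 0\<close>] .
  moreover have "\<not> upper_reachable Q x y \<Longrightarrow> ?\<phi> t y = 0"
    using not_upper_reachable_imp_solution_zero[OF \<phi> _ less_imp_le[OF \<open>t > 0\<close>]] .
  ultimately show ?thesis by force
qed

end
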